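(* Let $\mu_1,\mu_2\in\mathcal M^+_1(\mathbb R)$ satisfy $\operatorname{supp}\mu_1\subset(-\infty,a)$ and $\operatorname{supp}\mu_2\subset(a,\infty)$ for some $a\in\mathbb R$. Then there exists $\mu\in\mathcal M^+_2(\mathbb R)$ such that $$C_1[\mu_1](z)\,C_1[\mu_2](z)=C_2[\mu](z),\qquad z\in\mathbb C^+,$$ if and only if $$\int_{(a,\infty)}\int_{(-\infty,a)}\frac{\mu_1(ds)\,\mu_2(dt)}{t-s}<\infty.$$
   Context: $\mathbb C^+=\{z:\operatorname{Im}z>0\}$. For $\alpha\ge0$, $\mathcal M^+_\alpha(\mathbb R)$ is the set of positive Borel (Radon) measures $\mu$ on $\mathbb R$ with $\int_{\mathbb R}(1+|t|)^{-\alpha}\mu(dt)<\infty$. For $\alpha>0$, $C_\alpha[\mu](z)=\int_{\mathbb R}\frac{\mu(dt)}{(z+t)^\alpha}$, $z\in\mathbb C^+$. *)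

theory Defs
  imports "HOL-Analysis.Analysis"
begin

definition Mplus :: "real \<Rightarrow> real measure \<Rightarrow> bool" where
  "Mplus \<alpha> \<mu> \<longleftrightarrow> sets \<mu> = sets borel \<and>
     (\<integral>\<^sup>+ t. ennreal ((1 + \<bar>t\<bar>) powr (- \<alpha>)) \<partial>\<mu>) < \<infinity>"

definition msupp :: "real measure \<Rightarrow> real set" where
  "msupp \<mu> = {x. \<forall>e>0. emeasure \<mu> (ball x e) > 0}"

definition cauchy_tr :: "nat \<Rightarrow> real measure \<Rightarrow> complex \<Rightarrow> complex" where
  "cauchy_tr n \<mu> z = (\<integral> t. 1 / (z + complex_of_real t) ^ n \<partial>\<mu>)"

end

theory Submission
  imports Defs "HOL-Real_Asymp.Real_Asymp"
begin

text \<open>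
  Both directions rest on the identity
    1 / ((z + s) (z + t)) = (t - s)^(-1) * (integral from s to t of (z + u)^(-2) du)   for s < t.

  If D, the double integral of (t - s)^(-1) d mu1(s) d mu2(t), is finite, integrating the identity
  against mu2 x mu1 shows C_1[mu1] C_1[mu2] = C_2[mu] for the mixture mu of the uniform
  distributions on the intervals [s, t]; mu lies in M^+_2 because its integral of (1 + |u|)^(-2)
  is at most 2 D.

  Conversely, put z = -a + iv and P_i(v) = - Im C_1[mu_i](z), the integral of
  v / ((s - a)^2 + v^2) d mu_i(s). The supports lie on opposite sides of a, so
  Re C_1[mu1](z) <= 0 <= Re C_1[mu2](z), and the real part of C_1[mu1] C_1[mu2] = C_2[mu] yields
  P_1(v) P_2(v) <= Phi(v) := - Re C_2[mu](z). As - Re (z + t)^(-2) is the v-derivative of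
  - v / ((t - a)^2 + v^2), Fubini bounds the integral of Phi over [1, oo) by the integral of
  1 / (1 + (t - a)^2) d mu, which is finite. Finally the supports keep a distance d > 0 from a,
  hence (t - s)^(-1) is at most (4 + 2/d) times the integral over v in [1, oo) of the product of
  the two kernels v / ((s - a)^2 + v^2) and v / ((t - a)^2 + v^2), and Tonelli bounds D by
  (4 + 2/d) times the integral of P_1 P_2 over [1, oo).
\<close>

section \<open>Support of a measure\<close>

lemma ball_null_if_not_in_msupp:
  assumes "sets \<mu> = sets borel" "x \<notin> msupp \<mu>"
  obtains e where "e > 0" "ball x e \<in> null_sets \<mu>"
  using assms unfolding msupp_def by (auto simp: not_less null_sets_def)

lemma compact_disjoint_msupp_null:
  assumes sets: "sets \<mu> = sets borel" and K: "compact K" "K \<inter> msupp \<mu> = {}"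
  shows "K \<in> null_sets \<mu>"
proof -
  have "\<forall>x\<in>K. \<exists>e>0. ball x e \<in> null_sets \<mu>"
    using ball_null_if_not_in_msupp[OF sets] K(2) by (metis disjoint_iff)
  then obtain e where e: "\<And>x. x \<in> K \<Longrightarrow> e x > 0 \<and> ball x (e x) \<in> null_sets \<mu>"
    by metis
  then obtain F where F: "F \<subseteq> K" "finite F" "K \<subseteq> (\<Union>x\<in>F. ball x (e x))"
    using compactE_image[OF K(1), of K "\<lambda>x. ball x (e x)"] by force
  have "(\<Union>x\<in>F. ball x (e x)) \<in> null_sets \<mu>"
    using F e by (intro null_sets_UN') (auto intro: countable_finite)
  moreover have "K \<in> sets \<mu>"
    using sets K(1) by (simp add: compact_imp_closed)
  ultimately show ?thesis
    using F(3) null_sets_subset by blast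
qed

lemma real_in_symmetric_interval: "\<exists>n::nat. x \<in> {- real n..real n}"
proof -
  obtain n :: nat where "\<bar>x\<bar> \<le> real n"
    using real_arch_simple by blast
  then show ?thesis
    by (intro exI[of _ n]) (auto simp: abs_le_iff)
qed

lemma closed_disjoint_msupp_null:
  assumes sets: "sets \<mu> = sets borel" and F: "closed F" "F \<inter> msupp \<mu> = {}"
  shows "F \<in> null_sets \<mu>"
proof -
  have "F = (\<Union>n::nat. F \<inter> {- real n..real n})"
    using real_in_symmetric_interval by auto
  moreover have "(\<Union>n::nat. F \<inter> {- real n..real n}) \<in> null_sets \<mu>"
  proof (rule null_sets_UN)
    fix n :: nat
    have "F \<inter> {- real n..real n} \<inter> msupp \<mu> = {}"
      using F(2) by blast
    then show "F \<inter> {- real n..real n} \<in> null_sets \<mu>"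
      by (intro compact_disjoint_msupp_null[OF sets] closed_Int_compact F(1) compact_Icc)
  qed
  ultimately show ?thesis
    by simp
qed

lemma AE_less_if_msupp_subset_lessThan:
  assumes sets: "sets \<mu> = sets borel" and supp: "msupp \<mu> \<subseteq> {..<a}"
  shows "\<exists>d>0. AE s in \<mu>. s < a - d"
proof -
  obtain e where e: "e > 0" "ball a e \<in> null_sets \<mu>"
    using ball_null_if_not_in_msupp[OF sets] supp by blast
  have "{a..} \<in> null_sets \<mu>"
    using supp by (intro closed_disjoint_msupp_null[OF sets]) auto
  then have "ball a e \<union> {a..} \<in> null_sets \<mu>"
    using e by auto
  then have "{a - e/2..} \<in> null_sets \<mu>"
    by (rule null_sets_subset) (use e in \<open>auto simp: sets dist_real_def\<close>)
  then show ?thesis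
    using e(1) by (intro exI[of _ "e/2"]) (auto dest: AE_not_in)
qed

lemma AE_greater_if_msupp_subset_greaterThan:
  assumes sets: "sets \<mu> = sets borel" and supp: "msupp \<mu> \<subseteq> {a<..}"
  shows "\<exists>d>0. AE t in \<mu>. a + d < t"
proof -
  obtain e where e: "e > 0" "ball a e \<in> null_sets \<mu>"
    using ball_null_if_not_in_msupp[OF sets] supp by blast
  have "{..a} \<in> null_sets \<mu>"
    using supp by (intro closed_disjoint_msupp_null[OF sets]) auto
  then have "ball a e \<union> {..a} \<in> null_sets \<mu>"
    using e by auto
  then have "{..a + e/2} \<in> null_sets \<mu>"
    by (rule null_sets_subset) (use e in \<open>auto simp: sets dist_real_def\<close>)
  then show ?thesis
    using e(1) by (intro exI[of _ "e/2"]) (auto dest: AE_not_in)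
qed

section \<open>The classes M^+_alpha and the Cauchy kernel\<close>

lemma sets_Mplus: "Mplus \<alpha> \<mu> \<Longrightarrow> sets \<mu> = sets borel"
  by (simp add: Mplus_def)

lemma Mplus_mono:
  assumes "\<alpha> \<le> \<beta>" "Mplus \<alpha> \<mu>"
  shows "Mplus \<beta> \<mu>"
proof -
  have "(\<integral>\<^sup>+ t. (1 + \<bar>t\<bar>) powr - \<beta> \<partial>\<mu>) \<le> (\<integral>\<^sup>+ t. (1 + \<bar>t\<bar>) powr - \<alpha> \<partial>\<mu>)"
    using assms(1) by (intro nn_integral_mono ennreal_leI powr_mono) auto
  then show ?thesis
    using assms(2) unfolding Mplus_def by (auto intro: le_less_trans)
qed

lemma integrable_Mplus:
  fixes g :: "real \<Rightarrow> 'b::{banach, second_countable_topology}"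
  assumes M: "Mplus \<alpha> \<mu>" and g: "g \<in> borel_measurable borel"
    and bound: "\<And>t. norm (g t) \<le> C * (1 + \<bar>t\<bar>) powr (- \<alpha>)"
  shows "integrable \<mu> g"
proof -
  note [measurable_cong] = sets_Mplus[OF M]
  have "norm (g 0) \<le> C"
    using bound[of 0] by simp
  then have "0 \<le> C"
    using norm_ge_zero[of "g 0"] by linarith
  then have "(\<integral>\<^sup>+ t. norm (g t) \<partial>\<mu>) \<le> (\<integral>\<^sup>+ t. ennreal C * ennreal ((1 + \<bar>t\<bar>) powr (- \<alpha>)) \<partial>\<mu>)"
    by (intro nn_integral_mono) (simp add: bound ennreal_mult[symmetric] ennreal_leI)
  also have "\<dots> = ennreal C * (\<integral>\<^sup>+ t. ennreal ((1 + \<bar>t\<bar>) powr (- \<alpha>)) \<partial>\<mu>)"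
    by (intro nn_integral_cmult) measurable
  also have "\<dots> < \<infinity>"
    using M unfolding Mplus_def by (simp add: ennreal_mult_less_top)
  finally show ?thesis
    using g by (simp add: integrable_iff_bounded)
qed

lemma sigma_finite_Mplus:
  assumes M: "Mplus \<alpha> \<mu>" and "0 \<le> \<alpha>"
  shows "sigma_finite_measure \<mu>"
proof
  have sets: "sets \<mu> = sets borel"
    using M by (rule sets_Mplus)
  have "integrable \<mu> (indicator {- real n..real n} :: real \<Rightarrow> real)" for n :: nat
  proof (rule integrable_Mplus[OF M, where C = "(1 + real n) powr \<alpha>"])
    fix t
    show "norm (indicator {- real n..real n} t :: real) \<le> (1 + real n) powr \<alpha> * (1 + \<bar>t\<bar>) powr - \<alpha>"
      using \<open>0 \<le> \<alpha>\<close> by (auto simp: indicator_def powr_minus_divide divide_simps intro: powr_mono2)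
  qed simp
  then have "emeasure \<mu> {- real n..real n} \<noteq> \<infinity>" for n :: nat
    by (simp add: integrable_indicator_iff sets_eq_imp_space_eq[OF sets] less_top)
  moreover have "(\<Union>n::nat. {- real n..real n}) = space \<mu>"
    using real_in_symmetric_interval by (auto simp: sets_eq_imp_space_eq[OF sets])
  ultimately show "\<exists>A. countable A \<and> A \<subseteq> sets \<mu> \<and> \<Union> A = space \<mu> \<and> (\<forall>a\<in>A. emeasure \<mu> a \<noteq> \<infinity>)"
    by (intro exI[of _ "range (\<lambda>n::nat. {- real n..real n})"]) (auto simp: sets)
qed

lemma cauchy_kernel_nonzero: "Im z > 0 \<Longrightarrow> z + complex_of_real t \<noteq> 0"
  by (auto simp: complex_eq_iff)

lemma one_plus_abs_le_norm_cauchy_kernel: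
  assumes "Im z > 0"
  shows "1 + \<bar>t\<bar> \<le> (1 + (1 + cmod z) / Im z) * cmod (z + complex_of_real t)"
proof -
  have "Im z \<le> cmod (z + complex_of_real t)"
    using abs_Im_le_cmod[of "z + complex_of_real t"] by simp
  then have "(1 + cmod z) / Im z * Im z \<le> (1 + cmod z) / Im z * cmod (z + complex_of_real t)"
    using assms by (intro mult_left_mono) auto
  then have "1 + cmod z \<le> (1 + cmod z) / Im z * cmod (z + complex_of_real t)"
    using assms by simp
  moreover have "\<bar>t\<bar> \<le> cmod (z + complex_of_real t) + cmod z"
    using norm_triangle_ineq4[of "z + complex_of_real t" z] by simp
  ultimately show ?thesis
    by (simp add: algebra_simps)
qed

lemma norm_cauchy_kernel_le:
  assumes "Im z > 0"
  shows "norm (1 / (z + complex_of_real t) ^ n)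
           \<le> (1 + (1 + cmod z) / Im z) ^ n * (1 + \<bar>t\<bar>) powr - real n"
proof -
  let ?K = "1 + (1 + cmod z) / Im z" and ?w = "z + complex_of_real t"
  have "0 < cmod ?w"
    using cauchy_kernel_nonzero[OF assms] by simp
  then have "(1 + \<bar>t\<bar>) / cmod ?w \<le> ?K"
    using one_plus_abs_le_norm_cauchy_kernel[OF assms, of t] by (simp add: pos_divide_le_eq)
  then have "1 / cmod ?w \<le> ?K / (1 + \<bar>t\<bar>)"
    by (simp add: pos_le_divide_eq add_pos_nonneg)
  then have "(1 / cmod ?w) ^ n \<le> (?K / (1 + \<bar>t\<bar>)) ^ n"
    by (rule power_mono) simp
  then show ?thesis
    by (simp add: norm_divide norm_power power_divide powr_minus_divide powr_realpow)
qed

lemma integrable_cauchy_kernel: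
  assumes "Mplus (real n) \<mu>" "Im z > 0"
  shows "integrable \<mu> (\<lambda>t. 1 / (z + complex_of_real t) ^ n)"
  by (rule integrable_Mplus[OF assms(1) _ norm_cauchy_kernel_le[OF assms(2)]]) measurable

section \<open>Sufficiency: a mixture of uniform distributions\<close>

lemma (in pair_sigma_finite) integrable_mult_pair:
  fixes f :: "'a \<Rightarrow> 'c::{real_normed_field, banach, second_countable_topology}"
  assumes f: "integrable M1 f" and g: "integrable M2 g"
  shows "integrable (M1 \<Otimes>\<^sub>M M2) (\<lambda>p. f (fst p) * g (snd p))"
proof -
  have [measurable]: "f \<in> borel_measurable M1" "g \<in> borel_measurable M2"
    using f g by auto
  have "(\<integral>\<^sup>+ p. norm (f (fst p) * g (snd p)) \<partial>(M1 \<Otimes>\<^sub>M M2))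
      = (\<integral>\<^sup>+ x. \<integral>\<^sup>+ y. ennreal (norm (f x)) * ennreal (norm (g y)) \<partial>M2 \<partial>M1)"
    by (subst M2.nn_integral_fst[symmetric]) (auto simp: norm_mult ennreal_mult)
  also have "\<dots> = (\<integral>\<^sup>+ x. norm (f x) \<partial>M1) * (\<integral>\<^sup>+ y. norm (g y) \<partial>M2)"
    by (simp add: nn_integral_cmult nn_integral_multc)
  also have "\<dots> < \<infinity>"
    using f g by (simp add: integrable_iff_bounded ennreal_mult_less_top)
  finally show ?thesis
    by (simp add: integrable_iff_bounded)
qed

lemma (in pair_sigma_finite) integral_mult_pair:
  fixes f :: "'a \<Rightarrow> 'c::{real_normed_field, banach, second_countable_topology}"
  assumes f: "integrable M1 f" and g: "integrable M2 g"
  shows "(\<integral>p. f (fst p) * g (snd p) \<partial>(M1 \<Otimes>\<^sub>M M2)) = (\<integral>x. f x \<partial>M1) * (\<integral>y. g y \<partial>M2)"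
  using integral_fst'[OF integrable_mult_pair[OF f g]] by simp

lemma nn_integral_one_plus_abs_powr_minus_2: "(\<integral>\<^sup>+ u. (1 + \<bar>u\<bar>) powr - 2 \<partial>lborel) \<le> 2"
proof -
  define g where "g u = ennreal (1 / (1 + u)\<^sup>2) * indicator {0..} u" for u :: real
  have [measurable]: "g \<in> borel_measurable borel"
    unfolding g_def by measurable
  have "(\<integral>\<^sup>+ u. g u \<partial>lborel) = ennreal (0 - (- 1 / (1 + 0)))"
    unfolding g_def
  proof (rule nn_integral_FTC_atLeast)
    show "DERIV (\<lambda>u. - 1 / (1 + u)) x :> 1 / (1 + x)\<^sup>2" if "0 \<le> x" for x :: real
      using that by (auto intro!: derivative_eq_intros simp: power2_eq_square)
    show "((\<lambda>u::real. - 1 / (1 + u)) \<longlongrightarrow> 0) at_top"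
      by real_asymp
  qed auto
  then have g: "(\<integral>\<^sup>+ u. g u \<partial>lborel) = 1"
    by simp
  have "ennreal ((1 + \<bar>u\<bar>) powr - 2) \<le> g u + g (- u)" for u
    by (cases "0 \<le> u") (auto simp: g_def powr_minus_divide)
  then have "(\<integral>\<^sup>+ u. (1 + \<bar>u\<bar>) powr - 2 \<partial>lborel) \<le> (\<integral>\<^sup>+ u. g u + g (- u) \<partial>lborel)"
    by (intro nn_integral_mono)
  also have "\<dots> = (\<integral>\<^sup>+ u. g u \<partial>lborel) + (\<integral>\<^sup>+ u. g (- u) \<partial>lborel)"
    by (intro nn_integral_add) auto
  also have "(\<integral>\<^sup>+ u. g (- u) \<partial>lborel) = (\<integral>\<^sup>+ u. g u \<partial>lborel)"
    using nn_integral_real_affine[of g "-1" 0] by simp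
  finally show ?thesis
    by (simp add: g)
qed

lemma has_vector_derivative_minus_inverse:
  assumes "Im z > 0"
  shows "((\<lambda>u::real. - inverse (z + complex_of_real u))
           has_vector_derivative 1 / (z + complex_of_real u)\<^sup>2) (at u within S)"
proof -
  have "((\<lambda>w. - inverse (z + w)) has_field_derivative 1 / (z + complex_of_real u)\<^sup>2)
          (at (complex_of_real u))"
    using cauchy_kernel_nonzero[OF assms, of u]
    by (auto intro!: derivative_eq_intros simp: power2_eq_square divide_inverse)
  then show ?thesis
    by (rule has_vector_derivative_real_field)
qed

lemma cauchy_kernel_mult_eq_integral:
  assumes "s < t" and z: "Im z > 0"
  shows "(\<integral>u. (indicator {s..t} u / (t - s)) *\<^sub>R (1 / (z + complex_of_real u)\<^sup>2) \<partial>lborel)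
           = 1 / ((z + complex_of_real s) * (z + complex_of_real t))"
proof -
  let ?f = "\<lambda>u::real. 1 / (z + complex_of_real u)\<^sup>2"
  let ?F = "\<lambda>u::real. - inverse (z + complex_of_real u)"
  have "continuous_on {s..t} ?f"
    using cauchy_kernel_nonzero[OF z] by (intro continuous_intros) auto
  then have FTC: "(\<integral>u. indicator {s..t} u *\<^sub>R ?f u \<partial>lborel) = ?F t - ?F s"
    using \<open>s < t\<close> by (intro integral_FTC_atLeastAtMost has_vector_derivative_minus_inverse z) auto
  have "(\<integral>u. (indicator {s..t} u / (t - s)) *\<^sub>R ?f u \<partial>lborel)
      = (\<integral>u. (1 / (t - s)) *\<^sub>R (indicator {s..t} u *\<^sub>R ?f u) \<partial>lborel)"
    by (rule Bochner_Integration.integral_cong) auto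
  also have "\<dots> = (1 / (t - s)) *\<^sub>R (?F t - ?F s)"
    by (simp only: integral_scaleR_right FTC)
  also have "\<dots> = 1 / ((z + complex_of_real s) * (z + complex_of_real t))"
    using \<open>s < t\<close> cauchy_kernel_nonzero[OF z, of s] cauchy_kernel_nonzero[OF z, of t]
    by (simp add: field_simps scaleR_conv_of_real)
  finally show ?thesis .
qed

text \<open>
  The mixture gives a Borel set B the mass of |B inter [s, t]| / (t - s), integrated over
  s < a < t against mu1(ds) mu2(dt). Pairs are ordered (t, s), so that integrals over mu2 x mu1
  unfold to the iterated integral of the theorem.
\<close>

definition uniform_kernel :: "real \<Rightarrow> real \<times> real \<Rightarrow> real \<Rightarrow> real" where
  "uniform_kernel a p u =
     (if snd p < a \<and> a < fst p \<and> snd p \<le> u \<and> u \<le> fst p then 1 / (fst p - snd p) else 0)"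

definition uniform_mixture :: "real \<Rightarrow> real measure \<Rightarrow> real measure \<Rightarrow> real measure" where
  "uniform_mixture a \<mu>1 \<mu>2 =
     distr (density ((\<mu>2 \<Otimes>\<^sub>M \<mu>1) \<Otimes>\<^sub>M lborel) (\<lambda>x. uniform_kernel a (fst x) (snd x))) borel snd"

lemma borel_measurable_uniform_kernel [measurable]:
  "(\<lambda>x. uniform_kernel a (fst x) (snd x)) \<in> borel_measurable ((borel \<Otimes>\<^sub>M borel) \<Otimes>\<^sub>M borel)"
  unfolding uniform_kernel_def by measurable

lemma uniform_kernel_nonneg: "0 \<le> uniform_kernel a p u"
  by (simp add: uniform_kernel_def)

lemma integral_uniform_kernel_cauchy_kernel:
  assumes "snd p < a" "a < fst p" "Im z > 0"
  shows "(\<integral>u. uniform_kernel a p u *\<^sub>R (1 / (z + complex_of_real u)\<^sup>2) \<partial>lborel)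
           = 1 / (z + complex_of_real (fst p)) * (1 / (z + complex_of_real (snd p)))"
proof -
  have "(\<integral>u. uniform_kernel a p u *\<^sub>R (1 / (z + complex_of_real u)\<^sup>2) \<partial>lborel)
      = (\<integral>u. (indicator {snd p..fst p} u / (fst p - snd p)) *\<^sub>R (1 / (z + complex_of_real u)\<^sup>2) \<partial>lborel)"
    using assms by (intro Bochner_Integration.integral_cong) (auto simp: uniform_kernel_def indicator_def)
  then show ?thesis
    using assms by (simp add: cauchy_kernel_mult_eq_integral mult.commute)
qed

lemma Mplus_uniform_mixture:
  assumes M1: "Mplus 1 \<mu>1" and M2: "Mplus 1 \<mu>2"
    and fin: "(\<integral>\<^sup>+ t\<in>{a<..}. (\<integral>\<^sup>+ s\<in>{..<a}. ennreal (1 / (t - s)) \<partial>\<mu>1) \<partial>\<mu>2) < \<infinity>"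
  shows "Mplus 2 (uniform_mixture a \<mu>1 \<mu>2)"
proof -
  note [measurable_cong] = sets_Mplus[OF M1] sets_Mplus[OF M2]
  interpret \<mu>1: sigma_finite_measure \<mu>1 using sigma_finite_Mplus[OF M1] by simp
  interpret \<mu>2: sigma_finite_measure \<mu>2 using sigma_finite_Mplus[OF M2] by simp
  interpret X: sigma_finite_measure "\<mu>2 \<Otimes>\<^sub>M \<mu>1"
    by (rule sigma_finite_pair_measure) unfold_locales
  interpret XL: pair_sigma_finite "\<mu>2 \<Otimes>\<^sub>M \<mu>1" lborel ..
  define h where "h p = ennreal (if snd p < a \<and> a < fst p then 1 / (fst p - snd p) else 0)" for p
  define w where "w u = ennreal ((1 + \<bar>u\<bar>) powr - 2)" for u
  have [measurable]: "h \<in> borel_measurable (\<mu>2 \<Otimes>\<^sub>M \<mu>1)" "w \<in> borel_measurable borel"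
    unfolding h_def w_def by measurable
  have "(\<integral>\<^sup>+ p. h p \<partial>(\<mu>2 \<Otimes>\<^sub>M \<mu>1))
      = (\<integral>\<^sup>+ t\<in>{a<..}. (\<integral>\<^sup>+ s\<in>{..<a}. ennreal (1 / (t - s)) \<partial>\<mu>1) \<partial>\<mu>2)"
    by (subst \<mu>1.nn_integral_fst[symmetric])
       (auto simp: h_def indicator_def intro!: nn_integral_cong split: if_splits)
  then have D: "(\<integral>\<^sup>+ p. h p \<partial>(\<mu>2 \<Otimes>\<^sub>M \<mu>1)) < \<infinity>"
    using fin by simp
  have "(\<integral>\<^sup>+ u. w u \<partial>uniform_mixture a \<mu>1 \<mu>2)
      = (\<integral>\<^sup>+ p. \<integral>\<^sup>+ u. uniform_kernel a p u * w u \<partial>lborel \<partial>(\<mu>2 \<Otimes>\<^sub>M \<mu>1))"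
    unfolding uniform_mixture_def
    by (simp add: nn_integral_distr nn_integral_density lborel.nn_integral_fst[symmetric] split_beta')
  also have "\<dots> \<le> (\<integral>\<^sup>+ p. \<integral>\<^sup>+ u. h p * w u \<partial>lborel \<partial>(\<mu>2 \<Otimes>\<^sub>M \<mu>1))"
    by (intro nn_integral_mono mult_right_mono)
       (auto simp: uniform_kernel_def h_def indicator_def intro!: ennreal_leI)
  also have "\<dots> = (\<integral>\<^sup>+ p. h p \<partial>(\<mu>2 \<Otimes>\<^sub>M \<mu>1)) * (\<integral>\<^sup>+ u. w u \<partial>lborel)"
    by (simp add: nn_integral_cmult nn_integral_multc)
  also have "\<dots> < \<infinity>"
    using D nn_integral_one_plus_abs_powr_minus_2
    by (simp add: w_def ennreal_mult_less_top le_less_trans)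
  finally show ?thesis
    unfolding Mplus_def w_def by (simp add: uniform_mixture_def)
qed

lemma cauchy_tr_uniform_mixture:
  assumes M1: "Mplus 1 \<mu>1" and M2: "Mplus 1 \<mu>2"
    and AE1: "AE s in \<mu>1. s < a" and AE2: "AE t in \<mu>2. a < t"
    and M: "Mplus 2 (uniform_mixture a \<mu>1 \<mu>2)" and z: "Im z > 0"
  shows "cauchy_tr 1 \<mu>1 z * cauchy_tr 1 \<mu>2 z = cauchy_tr 2 (uniform_mixture a \<mu>1 \<mu>2) z"
proof -
  note [measurable_cong] = sets_Mplus[OF M1] sets_Mplus[OF M2]
  interpret \<mu>1: sigma_finite_measure \<mu>1 using sigma_finite_Mplus[OF M1] by simp
  interpret \<mu>2: sigma_finite_measure \<mu>2 using sigma_finite_Mplus[OF M2] by simp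
  interpret X: pair_sigma_finite \<mu>2 \<mu>1 ..
  interpret X': sigma_finite_measure "\<mu>2 \<Otimes>\<^sub>M \<mu>1"
    by (rule sigma_finite_pair_measure) unfold_locales
  interpret XL: pair_sigma_finite "\<mu>2 \<Otimes>\<^sub>M \<mu>1" lborel ..
  define c where "c n u = 1 / (z + complex_of_real u) ^ n" for n u
  have [measurable]: "c n \<in> borel_measurable borel" for n
    unfolding c_def by measurable
  have "integrable (uniform_mixture a \<mu>1 \<mu>2) (c 2)"
    unfolding c_def using integrable_cauchy_kernel[of 2] M z by simp
  then have int: "integrable ((\<mu>2 \<Otimes>\<^sub>M \<mu>1) \<Otimes>\<^sub>M lborel)
                    (\<lambda>x. uniform_kernel a (fst x) (snd x) *\<^sub>R c 2 (snd x))"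
    unfolding uniform_mixture_def
    by (simp add: integrable_distr_eq integrable_density uniform_kernel_nonneg)
  have "AE p in \<mu>2 \<Otimes>\<^sub>M \<mu>1. snd p < a \<and> a < fst p"
    using AE2 by (intro X.AE_pair_measure) (auto intro: AE_mp[OF AE1])
  then have inner_AE: "AE p in \<mu>2 \<Otimes>\<^sub>M \<mu>1.
      (\<integral>u. uniform_kernel a p u *\<^sub>R c 2 u \<partial>lborel) = c 1 (fst p) * c 1 (snd p)"
    by eventually_elim (simp add: c_def integral_uniform_kernel_cauchy_kernel z)
  have "cauchy_tr 2 (uniform_mixture a \<mu>1 \<mu>2) z
      = (\<integral>x. uniform_kernel a (fst x) (snd x) *\<^sub>R c 2 (snd x) \<partial>((\<mu>2 \<Otimes>\<^sub>M \<mu>1) \<Otimes>\<^sub>M lborel))"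
    unfolding uniform_mixture_def cauchy_tr_def c_def[symmetric]
    by (simp add: integral_distr integral_density uniform_kernel_nonneg)
  also have "\<dots> = (\<integral>p. \<integral>u. uniform_kernel a p u *\<^sub>R c 2 u \<partial>lborel \<partial>(\<mu>2 \<Otimes>\<^sub>M \<mu>1))"
    using XL.integral_fst'[OF int] by simp
  also have "\<dots> = (\<integral>p. c 1 (fst p) * c 1 (snd p) \<partial>(\<mu>2 \<Otimes>\<^sub>M \<mu>1))"
    using inner_AE by (intro integral_cong_AE) measurable
  also have "\<dots> = (\<integral>t. c 1 t \<partial>\<mu>2) * (\<integral>s. c 1 s \<partial>\<mu>1)"
    using integrable_cauchy_kernel[of 1] M1 M2 z unfolding c_def
    by (intro X.integral_mult_pair) auto
  also have "\<dots> = cauchy_tr 1 \<mu>2 z * cauchy_tr 1 \<mu>1 z"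
    by (simp add: cauchy_tr_def c_def)
  finally show ?thesis
    by (simp add: mult.commute)
qed

lemma ex_cauchy_tr2_eq_product_if_finite:
  assumes M1: "Mplus 1 \<mu>1" and M2: "Mplus 1 \<mu>2"
    and AE1: "AE s in \<mu>1. s < a" and AE2: "AE t in \<mu>2. a < t"
    and fin: "(\<integral>\<^sup>+ t\<in>{a<..}. (\<integral>\<^sup>+ s\<in>{..<a}. ennreal (1 / (t - s)) \<partial>\<mu>1) \<partial>\<mu>2) < \<infinity>"
  shows "\<exists>\<mu>. Mplus 2 \<mu> \<and> (\<forall>z. Im z > 0 \<longrightarrow> cauchy_tr 1 \<mu>1 z * cauchy_tr 1 \<mu>2 z = cauchy_tr 2 \<mu> z)"
  using Mplus_uniform_mixture[OF M1 M2 fin] cauchy_tr_uniform_mixture[OF M1 M2 AE1 AE2] by blast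

section \<open>Necessity: Poisson kernel estimates\<close>

text \<open>
  With z = -a + iv, poisson a v t = - Im (1 / (z + t)); it is pi times the Poisson kernel of
  the upper half-plane.
\<close>

definition poisson :: "real \<Rightarrow> real \<Rightarrow> real \<Rightarrow> real" where
  "poisson a v t = v / ((t - a)\<^sup>2 + v\<^sup>2)"

lemma borel_measurable_poisson [measurable (raw)]:
  assumes [measurable]: "f \<in> borel_measurable M" "g \<in> borel_measurable M"
  shows "(\<lambda>x. poisson a (f x) (g x)) \<in> borel_measurable M"
  unfolding poisson_def by measurable

lemma poisson_nonneg: "0 \<le> v \<Longrightarrow> 0 \<le> poisson a v t"
  by (simp add: poisson_def)

lemma cauchy_kernel_on_line: "Complex (- a) v + complex_of_real t = Complex (t - a) v"
  by (simp add: complex_eq_iff)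

lemma Re_cauchy_kernel_on_line:
  "Re (1 / (Complex (- a) v + complex_of_real t)) = (t - a) / ((t - a)\<^sup>2 + v\<^sup>2)"
  by (simp add: cauchy_kernel_on_line Re_divide power2_eq_square)

lemma Im_cauchy_kernel_on_line:
  "Im (1 / (Complex (- a) v + complex_of_real t)) = - poisson a v t"
  by (simp add: cauchy_kernel_on_line Im_divide poisson_def power2_eq_square)

lemma Re_cauchy_kernel_sq_on_line:
  "Re (1 / (Complex (- a) v + complex_of_real t)\<^sup>2) = ((t - a)\<^sup>2 - v\<^sup>2) / ((t - a)\<^sup>2 + v\<^sup>2)\<^sup>2"
proof -
  have "(Complex (t - a) v)\<^sup>2 = Complex ((t - a)\<^sup>2 - v\<^sup>2) (2 * (t - a) * v)"
    by (simp add: power2_eq_square complex_eq_iff algebra_simps)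
  moreover have "((t - a)\<^sup>2 - v\<^sup>2)\<^sup>2 + (2 * (t - a) * v)\<^sup>2 = ((t - a)\<^sup>2 + v\<^sup>2)\<^sup>2"
    by (simp add: power2_eq_square algebra_simps)
  ultimately show ?thesis
    by (simp add: cauchy_kernel_on_line Re_divide)
qed

lemma borel_measurable_Complex [measurable (raw)]:
  assumes [measurable]: "f \<in> borel_measurable M" "g \<in> borel_measurable M"
  shows "(\<lambda>x. Complex (f x) (g x)) \<in> borel_measurable M"
  unfolding Complex_eq by measurable

lemma norm_cauchy_kernel_sq_on_line:
  "norm (1 / (Complex (- a) v + complex_of_real t)\<^sup>2) = 1 / ((t - a)\<^sup>2 + v\<^sup>2)"
  by (simp add: cauchy_kernel_on_line norm_divide norm_power cmod_power2)

lemma has_real_derivative_poisson: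
  assumes "0 < v"
  shows "((\<lambda>v. poisson a v t) has_real_derivative Re (1 / (Complex (- a) v + complex_of_real t)\<^sup>2)) (at v)"
proof -
  have "0 < (t - a)\<^sup>2 + v\<^sup>2"
    using assms by (simp add: add_nonneg_pos)
  then show ?thesis
    unfolding poisson_def Re_cauchy_kernel_sq_on_line
    by (auto intro!: derivative_eq_intros simp: field_simps power2_eq_square)
qed

lemma integrable_poisson:
  assumes "Mplus 2 \<mu>" "0 < v"
  shows "integrable \<mu> (poisson a v)"
proof -
  have "integrable \<mu> (\<lambda>t. v * norm (1 / (Complex (- a) v + complex_of_real t)\<^sup>2))"
    using integrable_cauchy_kernel[of 2 \<mu> "Complex (- a) v"] assms by simp
  then show ?thesis
    by (simp add: norm_cauchy_kernel_sq_on_line poisson_def[abs_def])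
qed

lemma poisson_product_le_neg_Re_cauchy_product:
  assumes M1: "Mplus 1 \<mu>1" and M2: "Mplus 1 \<mu>2" and v: "0 < v"
    and AE1: "AE s in \<mu>1. s < a" and AE2: "AE t in \<mu>2. a < t"
  shows "(\<integral>s. poisson a v s \<partial>\<mu>1) * (\<integral>t. poisson a v t \<partial>\<mu>2)
           \<le> - Re (cauchy_tr 1 \<mu>1 (Complex (- a) v) * cauchy_tr 1 \<mu>2 (Complex (- a) v))"
proof -
  define z where "z = Complex (- a) v"
  have int: "integrable \<mu> (\<lambda>t. 1 / (z + complex_of_real t))" if "Mplus 1 \<mu>" for \<mu>
    using integrable_cauchy_kernel[of 1 \<mu> z] that v by (simp add: z_def)
  have Im: "Im (cauchy_tr 1 \<mu> z) = - (\<integral>t. poisson a v t \<partial>\<mu>)" if "Mplus 1 \<mu>" for \<mu>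
    using integral_Im[OF int[OF that]]
    by (simp add: cauchy_tr_def z_def Im_cauchy_kernel_on_line)
  have Re: "Re (cauchy_tr 1 \<mu> z) = (\<integral>t. (t - a) / ((t - a)\<^sup>2 + v\<^sup>2) \<partial>\<mu>)" if "Mplus 1 \<mu>" for \<mu>
    using integral_Re[OF int[OF that]]
    by (simp add: cauchy_tr_def z_def Re_cauchy_kernel_on_line)
  have "0 \<le> - Re (cauchy_tr 1 \<mu>1 z)"
    unfolding Re[OF M1] integral_minus[symmetric] using AE1
    by (intro integral_nonneg_AE) (auto elim!: eventually_mono intro!: divide_nonpos_pos add_pos_nonneg)
  moreover have "0 \<le> Re (cauchy_tr 1 \<mu>2 z)"
    unfolding Re[OF M2] using AE2
    by (intro integral_nonneg_AE) (auto elim!: eventually_mono)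
  ultimately have "0 \<le> - Re (cauchy_tr 1 \<mu>1 z) * Re (cauchy_tr 1 \<mu>2 z)"
    by (rule mult_nonneg_nonneg)
  moreover have "- Re (cauchy_tr 1 \<mu>1 z * cauchy_tr 1 \<mu>2 z)
      = - Re (cauchy_tr 1 \<mu>1 z) * Re (cauchy_tr 1 \<mu>2 z)
        + (\<integral>s. poisson a v s \<partial>\<mu>1) * (\<integral>t. poisson a v t \<partial>\<mu>2)"
    using Im[OF M1] Im[OF M2] by simp
  ultimately show ?thesis
    unfolding z_def by linarith
qed

lemma integral_neg_Re_cauchy_kernel_sq:
  assumes "1 \<le> y"
  shows "(\<integral>v. indicator {1..y} v * - Re (1 / (Complex (- a) v + complex_of_real t)\<^sup>2) \<partial>lborel)
           = poisson a 1 t - poisson a y t"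
proof -
  let ?f = "\<lambda>v. - Re (1 / (Complex (- a) v + complex_of_real t)\<^sup>2)"
  have "continuous_on {1..y} ?f"
    unfolding Re_cauchy_kernel_sq_on_line
    by (intro continuous_intros) (auto simp: add_nonneg_pos)
  moreover have "((\<lambda>v. - poisson a v t) has_vector_derivative ?f v) (at v within {1..y})" if "1 \<le> v" for v
  proof -
    have "((\<lambda>v. - poisson a v t) has_real_derivative ?f v) (at v)"
      using DERIV_minus[OF has_real_derivative_poisson[of v a t]] that by simp
    then show ?thesis
      by (simp add: has_real_derivative_iff_has_vector_derivative has_vector_derivative_at_within)
  qed
  ultimately show ?thesis
    using integral_FTC_atLeastAtMost[of 1 y "\<lambda>v. - poisson a v t" ?f] assms by simp
qed

lemma integrable_neg_Re_cauchy_kernel_sq_Icc: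
  assumes M: "Mplus 2 \<mu>"
  shows "integrable (\<mu> \<Otimes>\<^sub>M lborel)
           (\<lambda>(t, v). indicator {1..y} v * - Re (1 / (Complex (- a) v + complex_of_real t)\<^sup>2))"
    (is "integrable _ (\<lambda>(t, v). ?f t v)")
proof (rule Bochner_Integration.integrable_bound)
  note [measurable_cong] = sets_Mplus[OF M]
  interpret \<mu>: sigma_finite_measure \<mu>
    using sigma_finite_Mplus[OF M] by simp
  interpret \<mu>L: pair_sigma_finite \<mu> lborel ..
  show "integrable (\<mu> \<Otimes>\<^sub>M lborel) (\<lambda>x. poisson a 1 (fst x) * indicator {1..y} (snd x))"
    using integrable_poisson[OF M, of 1 a]
    by (intro \<mu>L.integrable_mult_pair) (auto simp: integrable_indicator_iff emeasure_lborel_Icc_eq)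
  show "(\<lambda>(t, v). ?f t v) \<in> borel_measurable (\<mu> \<Otimes>\<^sub>M lborel)"
    by measurable
  have "norm (?f t v) \<le> poisson a 1 t * indicator {1..y} v" for t v
  proof (cases "v \<in> {1..y}")
    case True
    have "\<bar>Re (1 / (Complex (- a) v + complex_of_real t)\<^sup>2)\<bar> \<le> 1 / ((t - a)\<^sup>2 + v\<^sup>2)"
      using abs_Re_le_cmod norm_cauchy_kernel_sq_on_line by metis
    also have "\<dots> \<le> poisson a 1 t"
      using True
      by (auto simp: poisson_def add.commute intro!: divide_left_mono mult_pos_pos add_pos_nonneg one_le_power)
    finally show ?thesis
      using True by simp
  qed simp
  then show "AE x in \<mu> \<Otimes>\<^sub>M lborel.
      norm ((\<lambda>(t, v). ?f t v) x) \<le> norm (poisson a 1 (fst x) * indicator {1..y} (snd x))"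
    using poisson_nonneg[of 1 a] by (auto simp: split_beta')
qed

lemma integral_Icc_neg_Re_cauchy_tr2:
  fixes a y :: real
  assumes M: "Mplus 2 \<mu>" and y: "1 \<le> y"
  defines "\<Phi> \<equiv> \<lambda>v. - Re (cauchy_tr 2 \<mu> (Complex (- a) v))"
  shows "integrable lborel (\<lambda>v. indicator {1..y} v * \<Phi> v)"
    and "(\<integral>v. indicator {1..y} v * \<Phi> v \<partial>lborel) = (\<integral>t. poisson a 1 t - poisson a y t \<partial>\<mu>)"
proof -
  interpret \<mu>: sigma_finite_measure \<mu>
    using sigma_finite_Mplus[OF M] by simp
  interpret \<mu>L: pair_sigma_finite \<mu> lborel ..
  define f where "f t v = indicator {1..y} v * - Re (1 / (Complex (- a) v + complex_of_real t)\<^sup>2)" for t v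
  have int: "integrable (\<mu> \<Otimes>\<^sub>M lborel) (\<lambda>(t, v). f t v)"
    unfolding f_def by (rule integrable_neg_Re_cauchy_kernel_sq_Icc[OF M])
  have "(\<integral>t. f t v \<partial>\<mu>) = indicator {1..y} v * \<Phi> v" for v
  proof (cases "v \<in> {1..y}")
    case True
    then have "integrable \<mu> (\<lambda>t. 1 / (Complex (- a) v + complex_of_real t)\<^sup>2)"
      using integrable_cauchy_kernel[of 2 \<mu> "Complex (- a) v"] M by simp
    then show ?thesis
      by (simp add: f_def \<Phi>_def cauchy_tr_def)
  qed (simp add: f_def)
  moreover have "(\<integral>v. f t v \<partial>lborel) = poisson a 1 t - poisson a y t" for t
    unfolding f_def using integral_neg_Re_cauchy_kernel_sq[OF y] .
  ultimately show "integrable lborel (\<lambda>v. indicator {1..y} v * \<Phi> v)"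
    and "(\<integral>v. indicator {1..y} v * \<Phi> v \<partial>lborel) = (\<integral>t. poisson a 1 t - poisson a y t \<partial>\<mu>)"
    using \<mu>L.integrable_snd[OF int] \<mu>L.Fubini_integral[OF int] by simp_all
qed

lemma nn_integral_atLeast_le:
  fixes f :: "real \<Rightarrow> ennreal"
  assumes [measurable]: "f \<in> borel_measurable borel"
    and bound: "\<And>y. c \<le> y \<Longrightarrow> (\<integral>\<^sup>+ v\<in>{c..y}. f v \<partial>lborel) \<le> B"
  shows "(\<integral>\<^sup>+ v\<in>{c..}. f v \<partial>lborel) \<le> B"
proof (rule LIMSEQ_le_const2)
  have "(\<lambda>n. f v * indicator {c..c + real n} v) \<longlonglongrightarrow> f v * indicator {c..} v" for v
  proof (rule tendsto_eventually)
    obtain N :: nat where "v - c \<le> real N"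
      using real_arch_simple by blast
    then show "\<forall>\<^sub>F n in sequentially. f v * indicator {c..c + real n} v = f v * indicator {c..} v"
      unfolding eventually_sequentially by (intro exI[of _ N]) (auto simp: indicator_def)
  qed
  then show "(\<lambda>n. \<integral>\<^sup>+ v\<in>{c..c + real n}. f v \<partial>lborel) \<longlonglongrightarrow> (\<integral>\<^sup>+ v\<in>{c..}. f v \<partial>lborel)"
    by (intro nn_integral_LIMSEQ)
       (auto simp: incseq_def le_fun_def indicator_def intro!: mult_left_mono)
  show "\<exists>N. \<forall>n\<ge>N. (\<integral>\<^sup>+ v\<in>{c..c + real n}. f v \<partial>lborel) \<le> B"
    using bound by auto
qed

lemma nn_integral_neg_Re_cauchy_tr2_le:
  assumes M: "Mplus 2 \<mu>"
    and nonneg: "\<And>v. 1 \<le> v \<Longrightarrow> 0 \<le> - Re (cauchy_tr 2 \<mu> (Complex (- a) v))"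
  shows "(\<integral>\<^sup>+ v\<in>{1..}. - Re (cauchy_tr 2 \<mu> (Complex (- a) v)) \<partial>lborel) \<le> (\<integral>t. poisson a 1 t \<partial>\<mu>)"
proof (rule nn_integral_atLeast_le)
  let ?\<Phi> = "\<lambda>v. - Re (cauchy_tr 2 \<mu> (Complex (- a) v))"
  note [measurable_cong] = sets_Mplus[OF M]
  interpret \<mu>: sigma_finite_measure \<mu>
    using sigma_finite_Mplus[OF M] by simp
  show "(\<lambda>v. ennreal (?\<Phi> v)) \<in> borel_measurable borel"
    unfolding cauchy_tr_def by measurable
  fix y :: real
  assume y: "1 \<le> y"
  have "(\<integral>\<^sup>+ v\<in>{1..y}. ?\<Phi> v \<partial>lborel) = (\<integral>\<^sup>+ v. indicator {1..y} v * ?\<Phi> v \<partial>lborel)"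
    by (intro nn_integral_cong) (simp add: indicator_def)
  also have "\<dots> = (\<integral>v. indicator {1..y} v * ?\<Phi> v \<partial>lborel)"
    using nonneg integral_Icc_neg_Re_cauchy_tr2(1)[OF M y]
    by (intro nn_integral_eq_integral) (auto simp: indicator_def)
  also have "\<dots> = (\<integral>t. poisson a 1 t - poisson a y t \<partial>\<mu>)"
    by (simp only: integral_Icc_neg_Re_cauchy_tr2(2)[OF M y])
  also have "\<dots> \<le> (\<integral>t. poisson a 1 t \<partial>\<mu>)"
    using y integrable_poisson[OF M] by (intro ennreal_leI integral_mono) (auto intro: poisson_nonneg)
  finally show "(\<integral>\<^sup>+ v\<in>{1..y}. ?\<Phi> v \<partial>lborel) \<le> (\<integral>t. poisson a 1 t \<partial>\<mu>)" .
qed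

lemma poisson_ge:
  assumes "0 < v" "\<bar>t - a\<bar> \<le> v"
  shows "1 / (2 * v) \<le> poisson a v t"
proof -
  have "(t - a)\<^sup>2 \<le> v\<^sup>2"
    using assms by (metis abs_le_square_iff abs_of_pos)
  then have "v / (2 * v\<^sup>2) \<le> v / ((t - a)\<^sup>2 + v\<^sup>2)"
    using assms(1) by (intro divide_left_mono) (auto intro!: mult_pos_pos add_nonneg_pos)
  then show ?thesis
    using assms(1) by (simp add: poisson_def power2_eq_square)
qed

lemma nn_integral_inverse_square_atLeast:
  assumes "0 < m"
  shows "(\<integral>\<^sup>+ v\<in>{m..}. ennreal (1 / v\<^sup>2) \<partial>lborel) = ennreal (1 / m)"
proof -
  have "(\<integral>\<^sup>+ v\<in>{m..}. ennreal (1 / v\<^sup>2) \<partial>lborel) = ennreal (0 - (- 1 / m))"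
  proof (rule nn_integral_FTC_atLeast)
    show "DERIV (\<lambda>v. - 1 / v) x :> 1 / x\<^sup>2" if "m \<le> x" for x :: real
      using that assms by (auto intro!: derivative_eq_intros simp: power2_eq_square)
    show "((\<lambda>v::real. - 1 / v) \<longlongrightarrow> 0) at_top"
      by real_asymp
  qed auto
  then show ?thesis
    by simp
qed

lemma inverse_diff_le_nn_integral_poisson:
  assumes d: "0 < d" and s: "s < a - d" and t: "a + d < t"
  shows "ennreal (1 / (t - s))
           \<le> ennreal (4 + 2 / d) * (\<integral>\<^sup>+ v\<in>{1..}. ennreal (poisson a v s * poisson a v t) \<partial>lborel)"
proof -
  \<comment> \<open>For v \<ge> m both factors are at least 1/(2v), and the gap d gives m \<le> (1 + 1/(2d)) (t - s).\<close>
  define m where "m = max 1 (max (a - s) (t - a))"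
  have m: "1 \<le> m"
    by (simp add: m_def)
  have "ennreal (1 / 4) * (ennreal (1 / v\<^sup>2) * indicator {m..} v)
          \<le> ennreal (poisson a v s * poisson a v t) * indicator {1..} v" for v
  proof (cases "m \<le> v")
    case True
    then have "1 / (2 * v) \<le> poisson a v s" "1 / (2 * v) \<le> poisson a v t"
      using m s t d by (auto simp: m_def intro!: poisson_ge)
    then have "(1 / (2 * v)) * (1 / (2 * v)) \<le> poisson a v s * poisson a v t"
      using True m by (intro mult_mono) (auto intro: poisson_nonneg)
    then show ?thesis
      using True m by (auto simp: power2_eq_square ennreal_mult[symmetric] intro!: ennreal_leI)
  qed simp
  then have "ennreal (1 / 4) * (\<integral>\<^sup>+ v\<in>{m..}. ennreal (1 / v\<^sup>2) \<partial>lborel)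
      \<le> (\<integral>\<^sup>+ v\<in>{1..}. ennreal (poisson a v s * poisson a v t) \<partial>lborel)"
    by (simp add: nn_integral_cmult[symmetric] nn_integral_mono)
  then have low: "ennreal (1 / (4 * m)) \<le> (\<integral>\<^sup>+ v\<in>{1..}. ennreal (poisson a v s * poisson a v t) \<partial>lborel)"
    using m by (simp add: nn_integral_inverse_square_atLeast ennreal_mult[symmetric])
  define q where "q = (t - s) / (2 * d)"
  have "1 \<le> q"
    using s t d by (simp add: q_def field_simps)
  then have "m \<le> (t - s) + q"
    unfolding m_def max.bounded_iff using s t d by linarith
  then have "m \<le> (1 + 1 / (2 * d)) * (t - s)"
    by (simp add: q_def algebra_simps)
  then have "1 / (t - s) \<le> (4 + 2 / d) * (1 / (4 * m))"
    using m s t d by (simp add: field_simps)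
  then have "ennreal (1 / (t - s)) \<le> ennreal ((4 + 2 / d) * (1 / (4 * m)))"
    by (rule ennreal_leI)
  also have "\<dots> = ennreal (4 + 2 / d) * ennreal (1 / (4 * m))"
    using m d by (intro ennreal_mult) auto
  also have "\<dots> \<le> ennreal (4 + 2 / d) * (\<integral>\<^sup>+ v\<in>{1..}. ennreal (poisson a v s * poisson a v t) \<partial>lborel)"
    using low by (rule mult_left_mono) simp
  finally show ?thesis .
qed

lemma nn_integral_inverse_diff_le_poisson:
  assumes [measurable_cong]: "sets \<mu>1 = sets borel" "sets \<mu>2 = sets borel"
    and "sigma_finite_measure \<mu>1" "sigma_finite_measure \<mu>2"
    and d: "0 < d" and AE1: "AE s in \<mu>1. s < a - d" and AE2: "AE t in \<mu>2. a + d < t"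
  shows "(\<integral>\<^sup>+ t\<in>{a<..}. (\<integral>\<^sup>+ s\<in>{..<a}. ennreal (1 / (t - s)) \<partial>\<mu>1) \<partial>\<mu>2)
           \<le> ennreal (4 + 2 / d) *
             (\<integral>\<^sup>+ v\<in>{1..}. (\<integral>\<^sup>+ s. poisson a v s \<partial>\<mu>1) * (\<integral>\<^sup>+ t. poisson a v t \<partial>\<mu>2) \<partial>lborel)"
proof -
  interpret \<mu>1: sigma_finite_measure \<mu>1 by fact
  interpret \<mu>2: sigma_finite_measure \<mu>2 by fact
  interpret \<mu>1L: pair_sigma_finite \<mu>1 lborel ..
  interpret \<mu>2L: pair_sigma_finite \<mu>2 lborel ..
  let ?g = "\<lambda>v s t. ennreal (poisson a v s) * ennreal (poisson a v t) * indicator {1..} v"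
  have g: "ennreal (poisson a v s * poisson a v t) * indicator {1..} v = ?g v s t" for v s t
    by (auto simp: indicator_def ennreal_mult poisson_nonneg)
  have "(\<integral>\<^sup>+ t\<in>{a<..}. (\<integral>\<^sup>+ s\<in>{..<a}. ennreal (1 / (t - s)) \<partial>\<mu>1) \<partial>\<mu>2)
      \<le> (\<integral>\<^sup>+ t. \<integral>\<^sup>+ s. ennreal (4 + 2 / d) * (\<integral>\<^sup>+ v. ?g v s t \<partial>lborel) \<partial>\<mu>1 \<partial>\<mu>2)"
  proof (intro nn_integral_mono_AE)
    show "AE t in \<mu>2. (\<integral>\<^sup>+ s\<in>{..<a}. ennreal (1 / (t - s)) \<partial>\<mu>1) * indicator {a<..} t
            \<le> (\<integral>\<^sup>+ s. ennreal (4 + 2 / d) * (\<integral>\<^sup>+ v. ?g v s t \<partial>lborel) \<partial>\<mu>1)"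
      using AE2
    proof eventually_elim
      fix t assume t: "a + d < t"
      have "AE s in \<mu>1. ennreal (1 / (t - s)) * indicator {..<a} s
              \<le> ennreal (4 + 2 / d) * (\<integral>\<^sup>+ v. ?g v s t \<partial>lborel)"
        using AE1
      proof eventually_elim
        fix s assume s: "s < a - d"
        then show "ennreal (1 / (t - s)) * indicator {..<a} s
              \<le> ennreal (4 + 2 / d) * (\<integral>\<^sup>+ v. ?g v s t \<partial>lborel)"
          using inverse_diff_le_nn_integral_poisson[OF d s t] d by (simp add: g)
      qed
      then have "(\<integral>\<^sup>+ s\<in>{..<a}. ennreal (1 / (t - s)) \<partial>\<mu>1)
          \<le> (\<integral>\<^sup>+ s. ennreal (4 + 2 / d) * (\<integral>\<^sup>+ v. ?g v s t \<partial>lborel) \<partial>\<mu>1)"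
        by (rule nn_integral_mono_AE)
      then show "(\<integral>\<^sup>+ s\<in>{..<a}. ennreal (1 / (t - s)) \<partial>\<mu>1) * indicator {a<..} t
            \<le> (\<integral>\<^sup>+ s. ennreal (4 + 2 / d) * (\<integral>\<^sup>+ v. ?g v s t \<partial>lborel) \<partial>\<mu>1)"
        by (simp add: indicator_def)
    qed
  qed
  also have "\<dots> = ennreal (4 + 2 / d) * (\<integral>\<^sup>+ t. \<integral>\<^sup>+ s. \<integral>\<^sup>+ v. ?g v s t \<partial>lborel \<partial>\<mu>1 \<partial>\<mu>2)"
    by (simp add: nn_integral_cmult)
  also have "(\<integral>\<^sup>+ t. \<integral>\<^sup>+ s. \<integral>\<^sup>+ v. ?g v s t \<partial>lborel \<partial>\<mu>1 \<partial>\<mu>2)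
      = (\<integral>\<^sup>+ t. \<integral>\<^sup>+ v. \<integral>\<^sup>+ s. ?g v s t \<partial>\<mu>1 \<partial>lborel \<partial>\<mu>2)"
    by (intro nn_integral_cong \<mu>1L.Fubini'[symmetric]) measurable
  also have "\<dots> = (\<integral>\<^sup>+ v. \<integral>\<^sup>+ t. \<integral>\<^sup>+ s. ?g v s t \<partial>\<mu>1 \<partial>\<mu>2 \<partial>lborel)"
    by (intro \<mu>2L.Fubini'[symmetric]) measurable
  also have "\<dots> = (\<integral>\<^sup>+ v\<in>{1..}. (\<integral>\<^sup>+ s. poisson a v s \<partial>\<mu>1) * (\<integral>\<^sup>+ t. poisson a v t \<partial>\<mu>2) \<partial>lborel)"
    by (simp add: nn_integral_multc nn_integral_cmult mult.assoc mult.left_commute)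
  finally show ?thesis .
qed

lemma finite_if_cauchy_tr2_eq_product:
  assumes M1: "Mplus 1 \<mu>1" and M2: "Mplus 1 \<mu>2" and M: "Mplus 2 \<mu>"
    and d: "0 < d" and AE1: "AE s in \<mu>1. s < a - d" and AE2: "AE t in \<mu>2. a + d < t"
    and eq: "\<And>z. Im z > 0 \<Longrightarrow> cauchy_tr 1 \<mu>1 z * cauchy_tr 1 \<mu>2 z = cauchy_tr 2 \<mu> z"
  shows "(\<integral>\<^sup>+ t\<in>{a<..}. (\<integral>\<^sup>+ s\<in>{..<a}. ennreal (1 / (t - s)) \<partial>\<mu>1) \<partial>\<mu>2) < \<infinity>"
proof -
  define \<Phi> where "\<Phi> v = - Re (cauchy_tr 2 \<mu> (Complex (- a) v))" for v
  define I where "I \<nu> v = (\<integral>s. poisson a v s \<partial>\<nu>)" for \<nu> v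
  have I_nonneg: "0 \<le> I \<nu> v" if "0 < v" for \<nu> v
    unfolding I_def using that by (intro Bochner_Integration.integral_nonneg poisson_nonneg) simp
  have nn_integral_poisson: "(\<integral>\<^sup>+ s. poisson a v s \<partial>\<nu>) = I \<nu> v" if "Mplus 1 \<nu>" "0 < v" for \<nu> v
    unfolding I_def using that Mplus_mono[of 1 2 \<nu>]
    by (intro nn_integral_eq_integral integrable_poisson) (auto simp: poisson_nonneg)
  have AE1': "AE s in \<mu>1. s < a" and AE2': "AE t in \<mu>2. a < t"
    using AE1 AE2 d by (auto elim: eventually_mono)
  have le_\<Phi>: "I \<mu>1 v * I \<mu>2 v \<le> \<Phi> v" if "0 < v" for v
  proof -
    have "I \<mu>1 v * I \<mu>2 v
        \<le> - Re (cauchy_tr 1 \<mu>1 (Complex (- a) v) * cauchy_tr 1 \<mu>2 (Complex (- a) v))"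
      unfolding I_def by (rule poisson_product_le_neg_Re_cauchy_product[OF M1 M2 that AE1' AE2'])
    also have "\<dots> = \<Phi> v"
      using that by (simp only: eq \<Phi>_def complex.sel)
    finally show ?thesis .
  qed
  have \<Phi>_nonneg: "0 \<le> \<Phi> v" if "0 < v" for v
    using le_\<Phi>[OF that] mult_nonneg_nonneg[OF I_nonneg[of v \<mu>1] I_nonneg[of v \<mu>2]] that by linarith
  have "(\<integral>\<^sup>+ t\<in>{a<..}. (\<integral>\<^sup>+ s\<in>{..<a}. ennreal (1 / (t - s)) \<partial>\<mu>1) \<partial>\<mu>2)
      \<le> ennreal (4 + 2 / d) *
          (\<integral>\<^sup>+ v\<in>{1..}. (\<integral>\<^sup>+ s. poisson a v s \<partial>\<mu>1) * (\<integral>\<^sup>+ t. poisson a v t \<partial>\<mu>2) \<partial>lborel)"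
    using sets_Mplus[OF M1] sets_Mplus[OF M2] sigma_finite_Mplus[OF M1] sigma_finite_Mplus[OF M2]
    by (intro nn_integral_inverse_diff_le_poisson d AE1 AE2) auto
  also have "\<dots> \<le> ennreal (4 + 2 / d) * (\<integral>\<^sup>+ v\<in>{1..}. \<Phi> v \<partial>lborel)"
  proof (intro mult_left_mono nn_integral_mono)
    fix v :: real
    show "(\<integral>\<^sup>+ s. poisson a v s \<partial>\<mu>1) * (\<integral>\<^sup>+ t. poisson a v t \<partial>\<mu>2) * indicator {1..} v
        \<le> ennreal (\<Phi> v) * indicator {1..} v"
    proof (cases "1 \<le> v")
      case True
      then show ?thesis
        using le_\<Phi> I_nonneg
        by (simp add: nn_integral_poisson M1 M2 ennreal_mult[symmetric] ennreal_leI)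
    qed simp
  qed simp
  also have "\<dots> \<le> ennreal (4 + 2 / d) * (\<integral>t. poisson a 1 t \<partial>\<mu>)"
    using \<Phi>_nonneg unfolding \<Phi>_def by (intro mult_left_mono nn_integral_neg_Re_cauchy_tr2_le M) auto
  also have "\<dots> < \<infinity>"
    by (simp add: ennreal_mult_less_top)
  finally show ?thesis .
qed

theorem theorem7p8:
  fixes \<mu>1 \<mu>2 :: "real measure" and a :: real
  assumes "Mplus 1 \<mu>1" and "Mplus 1 \<mu>2"
    and "msupp \<mu>1 \<subseteq> {..<a}" and "msupp \<mu>2 \<subseteq> {a<..}"
  shows "(\<exists>\<mu>. Mplus 2 \<mu> \<and>
            (\<forall>z. Im z > 0 \<longrightarrow> cauchy_tr 1 \<mu>1 z * cauchy_tr 1 \<mu>2 z = cauchy_tr 2 \<mu> z))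
         \<longleftrightarrow> (\<integral>\<^sup>+ t\<in>{a<..}. (\<integral>\<^sup>+ s\<in>{..<a}. ennreal (1 / (t - s)) \<partial>\<mu>1) \<partial>\<mu>2) < \<infinity>"
proof -
  note M1 = assms(1) and M2 = assms(2)
  obtain d1 where d1: "0 < d1" "AE s in \<mu>1. s < a - d1"
    using AE_less_if_msupp_subset_lessThan[OF sets_Mplus[OF M1] assms(3)] by blast
  obtain d2 where d2: "0 < d2" "AE t in \<mu>2. a + d2 < t"
    using AE_greater_if_msupp_subset_greaterThan[OF sets_Mplus[OF M2] assms(4)] by blast
  define d where "d = min d1 d2"
  have d: "0 < d" "AE s in \<mu>1. s < a - d" "AE t in \<mu>2. a + d < t"
    using d1 d2 by (auto simp: d_def elim: eventually_mono)
  moreover have "AE s in \<mu>1. s < a" "AE t in \<mu>2. a < t"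
    using d by (auto elim: eventually_mono)
  ultimately show ?thesis
    using finite_if_cauchy_tr2_eq_product[OF M1 M2] ex_cauchy_tr2_eq_product_if_finite[OF M1 M2]
    by blast
qed

end
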